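(* Let $X\subset\mathbb{R}^N$ and $Y\subset\mathbb{R}^M$ be nondegenerate closed sets and $f:X\to Y$ a homeomorphism. If $p$ is a local cut-point of $X$, then $f(p)$ is a local cut-point of $Y$.
   Context: For a closed set $X\subset\mathbb{R}^N$, $x_0\in X$ and $r>0$, let $C_X(x_0,r)$ denote the connected component of $\overline{B}(x_0,r)\cap X$ containing $x_0$. A point $x_0\in X$ is a local cut-point of $X$ if there exists $r>0$ such that $C_X(x_0,r)\setminus\{x_0\}$ is not connected. *)

theory Defs
  imports "HOL-Analysis.Analysis"
begin

definition comp_ball :: "'a::euclidean_space set \<Rightarrow> 'a \<Rightarrow> real \<Rightarrow> 'a set" where
  "comp_ball X x0 r = connected_component_set (cball x0 r \<inter> X) x0"

definition local_cut_point :: "'a::euclidean_space set \<Rightarrow> 'a \<Rightarrow> bool" where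
  "local_cut_point X x0 \<longleftrightarrow> x0 \<in> X \<and>
     (\<exists>r>0. \<not> connected (comp_ball X x0 r - {x0}))"

definition nondegenerate :: "'a set \<Rightarrow> bool" where
  "nondegenerate X \<longleftrightarrow> (\<exists>x\<in>X. \<exists>y\<in>X. x \<noteq> y)"

end

theory Submission
  imports Defs
begin

text \<open>
  Let \<open>K = C\<^sub>X(p,r)\<close> with \<open>K - {p}\<close> disconnected. Its image \<open>f ` K\<close> is a continuum
  that \<open>f p\<close> disconnects, and by continuity of \<open>f\<^sup>-\<^sup>1\<close> it contains a small
  component \<open>C = C\<^sub>Y(f p, s)\<close>. By boundary bumping, each nonempty clopen piece of
  \<open>f ` K - {f p}\<close> is reached from \<open>f p\<close> by arbitrarily small subcontinua, which
  lie in \<open>C\<close>; so \<open>C - {f p}\<close> meets two complementary clopen pieces and is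
  disconnected.
\<close>

lemma comp_ball_subset: "comp_ball X x r \<subseteq> cball x r \<inter> X"
  unfolding comp_ball_def by (rule connected_component_subset)

lemma connected_comp_ball: "connected (comp_ball X x r)"
  unfolding comp_ball_def by simp

lemma centre_in_comp_ball: "x \<in> X \<Longrightarrow> 0 \<le> r \<Longrightarrow> x \<in> comp_ball X x r"
  unfolding comp_ball_def by simp

lemma comp_ball_maximal:
  "connected S \<Longrightarrow> x \<in> S \<Longrightarrow> S \<subseteq> cball x r \<inter> X \<Longrightarrow> S \<subseteq> comp_ball X x r"
  unfolding comp_ball_def by (rule connected_component_maximal)

lemma compact_comp_ball:
  assumes "closed X"
  shows "compact (comp_ball X x r)"
proof -
  have "closed (comp_ball X x r)"
    unfolding comp_ball_def using assms by (simp add: closed_connected_component closed_Int)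
  then have "compact (cball x r \<inter> X \<inter> comp_ball X x r)"
    using assms by (simp add: compact_Int_closed)
  then show ?thesis
    using comp_ball_subset by (metis inf.absorb2)
qed

lemma boundary_bumping_punctured_continuum:
  fixes K :: "'a::euclidean_space set"
  assumes "compact K" "connected K" "q \<in> K"
    and opT: "openin (top_of_set (K - {q})) T" and clT: "closedin (top_of_set (K - {q})) T"
    and "T \<noteq> {}" "e > 0"
  obtains D where "connected D" "q \<in> D" "D \<subseteq> K \<inter> cball q e" "D \<inter> T \<noteq> {}"
proof -
  let ?S = "insert q T"
  let ?top = "top_of_set ?S"
  have TK: "T \<subseteq> K - {q}"
    using opT openin_imp_subset by blast
  have "connected ?S"
    using connected_Un_clopen_in_complement[of "{q}" K T] assms by auto
  then have "connected_space ?top"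
    by (simp add: connected_space_subtopology)
  obtain F where "closed F" "T = (K - {q}) \<inter> F"
    using clT closedin_closed by blast
  then have "?S = K \<inter> (F \<union> {q})"
    using \<open>q \<in> K\<close> by auto
  with \<open>closed F\<close> have "compact ?S"
    using \<open>compact K\<close> by (simp add: compact_Int_closed closed_Un)
  then have lc: "locally_compact_space ?top"
    by (simp add: compact_space_subtopology compact_imp_locally_compact_space)
  have nontriv: "{q} \<noteq> topspace ?top"
    using \<open>T \<noteq> {}\<close> TK by auto
  have "q \<in> topspace ?top"
    by simp
  have U: "openin ?top (?S \<inter> ball q e)"
    by (rule openin_open_Int) simp
  have qU: "{q} \<subseteq> ?S \<inter> ball q e"
    using \<open>e > 0\<close> by simp
  obtain D where D: "compactin ?top D" "connectedin ?top D" "{q} \<subset> D" "D \<subset> ?S \<inter> ball q e"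
    by (rule intermediate_continuum_exists[OF \<open>connected_space ?top\<close> lc
          Hausdorff_space_subtopology[OF Hausdorff_space_euclidean]
          compactin_sing[THEN iffD2] connectedin_sing[THEN iffD2] _ nontriv U qU])
      (use \<open>q \<in> topspace ?top\<close> in simp_all)
  show ?thesis
  proof (rule that)
    show "connected D"
      using D(2) by (simp add: connectedin_subtopology)
    show "q \<in> D" "D \<inter> T \<noteq> {}"
      using D(3,4) by blast+
    show "D \<subseteq> K \<inter> cball q e"
      using D(4) TK \<open>q \<in> K\<close> by auto
  qed
qed

lemma not_connected_punctured_comp_ball:
  fixes K Y :: "'a::euclidean_space set"
  assumes K: "compact K" "connected K" "q \<in> K" and "\<not> connected (K - {q})"
    and "K \<subseteq> Y" and "e > 0" and CK: "comp_ball Y q e \<subseteq> K"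
  shows "\<not> connected (comp_ball Y q e - {q})"
proof
  let ?C = "comp_ball Y q e"
  let ?top = "top_of_set (K - {q})"
  have meets: "(?C - {q}) \<inter> U \<noteq> {}"
    if U: "openin ?top U" "closedin ?top U" "U \<noteq> {}" for U
  proof -
    obtain D where D: "connected D" "q \<in> D" "D \<subseteq> K \<inter> cball q e" "D \<inter> U \<noteq> {}"
      using boundary_bumping_punctured_continuum[OF K U \<open>e > 0\<close>] .
    then have "D \<subseteq> ?C"
      using \<open>K \<subseteq> Y\<close> by (intro comp_ball_maximal) auto
    then show ?thesis
      using D(4) openin_imp_subset[OF U(1)] by blast
  qed
  obtain T where opT: "openin ?top T" and clT: "closedin ?top T"
    and "T \<noteq> {}" and "T \<noteq> K - {q}"
    using \<open>\<not> connected (K - {q})\<close> unfolding connected_clopen by blast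
  have opT': "openin ?top (K - {q} - T)" and clT': "closedin ?top (K - {q} - T)"
    using opT clT by (auto intro: openin_diff closedin_diff)
  have "K - {q} - T \<noteq> {}"
    using \<open>T \<noteq> K - {q}\<close> openin_imp_subset[OF opT] by blast
  assume "connected (?C - {q})"
  then have "connectedin ?top (?C - {q})"
    using CK by (auto simp: connectedin_subtopology)
  then have "?C - {q} \<subseteq> T \<or> disjnt (?C - {q}) T"
    using connectedin_clopen_cases opT clT by blast
  then show False
    using meets[OF opT clT \<open>T \<noteq> {}\<close>] meets[OF opT' clT' \<open>K - {q} - T \<noteq> {}\<close>]
    by (auto simp: disjnt_def)
qed

lemma homeomorphism_not_connected_punctured_image:
  assumes hom: "homeomorphism X Y f g" and "K \<subseteq> X" "p \<in> K" "\<not> connected (K - {p})"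
  shows "\<not> connected (f ` K - {f p})"
proof -
  have "K - {p} \<subseteq> X"
    using assms(2) by blast
  have "inj_on f K"
    using homeomorphism_apply1[OF hom] assms(2) by (metis inj_on_inverseI subsetD)
  then have "f ` (K - {p}) = f ` K - f ` {p}"
    using assms(3) by (intro inj_on_image_set_diff) auto
  moreover have "homeomorphism (K - {p}) (f ` (K - {p})) f g"
    using homeomorphism_of_subsets[OF hom \<open>K - {p} \<subseteq> X\<close> order_refl refl] .
  then have "(K - {p}) homeomorphic f ` (K - {p})"
    unfolding homeomorphic_def by blast
  ultimately show ?thesis
    using assms(4) homeomorphic_connectedness by (metis image_empty image_insert)
qed

lemma homeomorphism_comp_ball_in_image:
  assumes hom: "homeomorphism X Y f g" and "p \<in> X" "r > 0"
  obtains s where "s > 0" "comp_ball Y (f p) s \<subseteq> f ` comp_ball X p r"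
proof -
  have fp: "f p \<in> Y" "g (f p) = p"
    using hom \<open>p \<in> X\<close> by (auto simp: homeomorphism_def)
  then obtain d where "d > 0" and d: "\<forall>y\<in>Y. dist y (f p) < d \<longrightarrow> dist (g y) p < r"
    using homeomorphism_cont2[OF hom] \<open>r > 0\<close> unfolding continuous_on_iff by metis
  let ?C = "comp_ball Y (f p) (d / 2)"
  have CY: "?C \<subseteq> Y" and Cd: "?C \<subseteq> ball (f p) d"
    using comp_ball_subset[of Y "f p" "d / 2"] \<open>d > 0\<close> by (auto simp: dist_commute)
  have "g ` ?C \<subseteq> cball p r \<inter> X"
  proof
    fix x assume "x \<in> g ` ?C"
    then obtain y where "y \<in> ?C" "x = g y" by blast
    then have "y \<in> Y" "dist y (f p) < d"
      using CY Cd by (auto simp: dist_commute)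
    then have "dist (g y) p < r"
      using d by blast
    then show "x \<in> cball p r \<inter> X"
      using homeomorphism_image2[OF hom] \<open>x = g y\<close> \<open>y \<in> Y\<close> by (auto simp: dist_commute)
  qed
  moreover have "connected (g ` ?C)"
    using connected_continuous_image[OF continuous_on_subset[OF homeomorphism_cont2[OF hom] CY]]
      connected_comp_ball .
  moreover have "f p \<in> ?C"
    using centre_in_comp_ball[of "f p" Y "d / 2"] \<open>d > 0\<close> fp by simp
  then have "p \<in> g ` ?C"
    using fp by (metis image_eqI)
  ultimately have "f ` g ` ?C \<subseteq> f ` comp_ball X p r"
    by (intro image_mono comp_ball_maximal)
  moreover have "f ` g ` ?C = ?C"
    unfolding image_image using CY homeomorphism_apply2[OF hom] by (simp add: subset_iff)
  ultimately show ?thesis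
    using that[of "d / 2"] \<open>d > 0\<close> by simp
qed

theorem lemma2p7:
  fixes X :: "'a::euclidean_space set" and Y :: "'b::euclidean_space set"
    and f :: "'a \<Rightarrow> 'b" and p :: 'a
  assumes "closed X" and "closed Y"
    and "nondegenerate X" and "nondegenerate Y"
    and "\<exists>g. homeomorphism X Y f g"
    and "local_cut_point X p"
  shows "local_cut_point Y (f p)"
proof -
  obtain g where hom: "homeomorphism X Y f g"
    using assms(5) by blast
  obtain r where "p \<in> X" "r > 0" and cut: "\<not> connected (comp_ball X p r - {p})"
    using assms(6) unfolding local_cut_point_def by blast
  let ?K = "comp_ball X p r"
  have KX: "?K \<subseteq> X"
    using comp_ball_subset by blast
  have pK: "p \<in> ?K"
    using centre_in_comp_ball[OF \<open>p \<in> X\<close>] \<open>r > 0\<close> by simp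
  have contf: "continuous_on ?K f"
    using homeomorphism_cont1[OF hom] KX continuous_on_subset by blast
  have "compact (f ` ?K)"
    using compact_continuous_image[OF contf] compact_comp_ball[OF \<open>closed X\<close>] .
  moreover have "connected (f ` ?K)"
    using connected_continuous_image[OF contf] connected_comp_ball .
  moreover have "f p \<in> f ` ?K"
    using pK by simp
  moreover have "\<not> connected (f ` ?K - {f p})"
    using homeomorphism_not_connected_punctured_image[OF hom KX pK cut] .
  moreover have KY: "f ` ?K \<subseteq> Y"
    using KX homeomorphism_image1[OF hom] by auto
  moreover obtain s where "s > 0" "comp_ball Y (f p) s \<subseteq> f ` ?K"
    using homeomorphism_comp_ball_in_image[OF hom \<open>p \<in> X\<close> \<open>r > 0\<close>] .
  ultimately have "\<not> connected (comp_ball Y (f p) s - {f p})"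
    by (rule not_connected_punctured_comp_ball)
  then show ?thesis
    unfolding local_cut_point_def using \<open>s > 0\<close> pK KY by blast
qed

end
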